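(* Let $G$ be a TDLC-group of type $\mathrm{FP}_{n+1}$, and let $(\mathbb{Q}[\Omega_i],\partial_i)$ and $(\mathbb{Q}[\Lambda_i],\delta_i)$ be two partial proper permutation resolutions of $\mathbb{Q}$ of finite type in degrees $0,\dots,n+1$. Then $G$ satisfies the weak $n$-dimensional linear isoperimetric inequality with respect to $(\mathbb{Q}[\Lambda_i],\delta_i)$ if and only if it does with respect to $(\mathbb{Q}[\Omega_i],\partial_i)$.
   Context: A TDLC-group is a totally disconnected locally compact Hausdorff topological group. A discrete $\mathbb{Q}[G]$-module is a left $\mathbb{Q}[G]$-module in which every element has open stabilizer. A $G$-set $\Omega$ is proper if all point stabilizers are compact open; $\mathbb{Q}[\Omega]$ is then a proper permutation module (projective among discrete modules), finitely generated iff $\Omega/G$ is finite, with $\ell_1$-norm $\|\sum a_\omega\omega\|_1=\sum|a_\omega|$. A partial proper permutation resolution of finite type in degrees $0,\dots,n+1$ is an exact sequence $\mathbb{Q}[\Omega_{n+1}]\xrightarrow{\partial_{n+1}}\mathbb{Q}[\Omega_n]\xrightarrow{\partial_n}\cdots\to\mathbb{Q}[\Omega_0]\to\mathbb{Q}\to0$ of discrete modules with each $\Omega_i$ a proper $G$-set with finitely many orbits; $G$ has type $\mathrm{FP}_{n+1}$ if one exists. $G$ satisfies the weak $n$-dimensional linear isoperimetric inequality with respect to such a resolution if there is $C>0$ with $\inf\{\|y\|_1: y\in\mathbb{Q}[\Omega_{n+1}],\ \partial_{n+1}(y)=x\}\le C\|x\|_1$ for all $x\in\ker\partial_n$. *)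

theory Defs
  imports "HOL-Analysis.Analysis" "HOL-Algebra.Group_Action"
begin

definition topological_group :: "('g, 'm) monoid_scheme \<Rightarrow> 'g topology \<Rightarrow> bool" where
  "topological_group G T \<longleftrightarrow> group G \<and> topspace T = carrier G \<and>
     continuous_map (prod_topology T T) T (\<lambda>p. fst p \<otimes>\<^bsub>G\<^esub> snd p) \<and>
     continuous_map T T (\<lambda>x. inv\<^bsub>G\<^esub> x)"

definition totally_disconnected_space :: "'a topology \<Rightarrow> bool" where
  "totally_disconnected_space T \<longleftrightarrow> (\<forall>S. connectedin T S \<longrightarrow> (\<exists>a. S \<subseteq> {a}))"

definition TDLC_group :: "('g, 'm) monoid_scheme \<Rightarrow> 'g topology \<Rightarrow> bool" where
  "TDLC_group G T \<longleftrightarrow> topological_group G T \<and> Hausdorff_space T \<and>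
     locally_compact_space T \<and> totally_disconnected_space T"

definition proper_G_set :: "('g, 'm) monoid_scheme \<Rightarrow> 'g topology \<Rightarrow> 'w set \<Rightarrow> ('g \<Rightarrow> 'w \<Rightarrow> 'w) \<Rightarrow> bool" where
  "proper_G_set G T Om act \<longleftrightarrow> group_action G Om act \<and>
     (\<forall>w\<in>Om. openin T (stabilizer G act w) \<and> compactin T (stabilizer G act w))"

definition perm_module :: "'w set \<Rightarrow> ('w \<Rightarrow> rat) set" where
  "perm_module Om = {x. finite {w. x w \<noteq> 0} \<and> {w. x w \<noteq> 0} \<subseteq> Om}"

definition perm_act :: "('g, 'm) monoid_scheme \<Rightarrow> 'w set \<Rightarrow> ('g \<Rightarrow> 'w \<Rightarrow> 'w) \<Rightarrow> 'g \<Rightarrow> ('w \<Rightarrow> rat) \<Rightarrow> ('w \<Rightarrow> rat)" where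
  "perm_act G Om act g x = (\<lambda>w. if w \<in> Om then x (act (inv\<^bsub>G\<^esub> g) w) else 0)"

definition l1_norm :: "('w \<Rightarrow> rat) \<Rightarrow> real" where
  "l1_norm x = (\<Sum>w\<in>{w. x w \<noteq> 0}. \<bar>real_of_rat (x w)\<bar>)"

definition perm_hom :: "('g, 'm) monoid_scheme \<Rightarrow> 'v set \<Rightarrow> ('g \<Rightarrow> 'v \<Rightarrow> 'v) \<Rightarrow> 'w set \<Rightarrow> ('g \<Rightarrow> 'w \<Rightarrow> 'w)
     \<Rightarrow> (('v \<Rightarrow> rat) \<Rightarrow> ('w \<Rightarrow> rat)) \<Rightarrow> bool" where
  "perm_hom G Om1 act1 Om2 act2 f \<longleftrightarrow>
     (\<forall>x\<in>perm_module Om1. f x \<in> perm_module Om2) \<and>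
     (\<forall>x\<in>perm_module Om1. \<forall>y\<in>perm_module Om1. f (\<lambda>w. x w + y w) = (\<lambda>w. f x w + f y w)) \<and>
     (\<forall>c. \<forall>x\<in>perm_module Om1. f (\<lambda>w. c * x w) = (\<lambda>w. c * f x w)) \<and>
     (\<forall>g\<in>carrier G. \<forall>x\<in>perm_module Om1. f (perm_act G Om1 act1 g x) = perm_act G Om2 act2 g (f x))"

definition aug_hom :: "('g, 'm) monoid_scheme \<Rightarrow> 'v set \<Rightarrow> ('g \<Rightarrow> 'v \<Rightarrow> 'v) \<Rightarrow> (('v \<Rightarrow> rat) \<Rightarrow> rat) \<Rightarrow> bool" where
  "aug_hom G Om act eps \<longleftrightarrow>
     (\<forall>x\<in>perm_module Om. \<forall>y\<in>perm_module Om. eps (\<lambda>w. x w + y w) = eps x + eps y) \<and>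
     (\<forall>c. \<forall>x\<in>perm_module Om. eps (\<lambda>w. c * x w) = c * eps x) \<and>
     (\<forall>g\<in>carrier G. \<forall>x\<in>perm_module Om. eps (perm_act G Om act g x) = eps x)"

text \<open>A partial proper permutation resolution of finite type in degrees 0..n+1:
  Q[Om (n+1)] --d (n+1)--> Q[Om n] --> ... --d 1--> Q[Om 0] --eps--> Q --> 0,
  where d i : Q[Om i] \<rightarrow> Q[Om (i-1)] for 1 \<le> i \<le> n+1, each Om i a proper G-set (with action act i)
  with finitely many orbits, and the sequence is exact.\<close>
definition partial_ppr :: "('g, 'm) monoid_scheme \<Rightarrow> 'g topology \<Rightarrow> nat \<Rightarrow> (nat \<Rightarrow> 'w set) \<Rightarrow>
    (nat \<Rightarrow> 'g \<Rightarrow> 'w \<Rightarrow> 'w) \<Rightarrow> (nat \<Rightarrow> ('w \<Rightarrow> rat) \<Rightarrow> ('w \<Rightarrow> rat)) \<Rightarrow> (('w \<Rightarrow> rat) \<Rightarrow> rat) \<Rightarrow> bool" where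
  "partial_ppr G T n Om act d eps \<longleftrightarrow>
     (\<forall>i\<le>Suc n. proper_G_set G T (Om i) (act i) \<and> finite (orbits G (Om i) (act i))) \<and>
     (\<forall>i\<in>{1..Suc n}. perm_hom G (Om i) (act i) (Om (i - 1)) (act (i - 1)) (d i)) \<and>
     aug_hom G (Om 0) (act 0) eps \<and>
     eps ` perm_module (Om 0) = UNIV \<and>
     {x\<in>perm_module (Om 0). eps x = 0} = d 1 ` perm_module (Om 1) \<and>
     (\<forall>i\<in>{1..n}. {x\<in>perm_module (Om i). d i x = (\<lambda>_. 0)} = d (Suc i) ` perm_module (Om (Suc i)))"

definition ppr_kernel :: "nat \<Rightarrow> (nat \<Rightarrow> 'w set) \<Rightarrow> (nat \<Rightarrow> ('w \<Rightarrow> rat) \<Rightarrow> ('w \<Rightarrow> rat)) \<Rightarrow>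
    (('w \<Rightarrow> rat) \<Rightarrow> rat) \<Rightarrow> ('w \<Rightarrow> rat) set" where
  "ppr_kernel i Om d eps = (if i = 0 then {x\<in>perm_module (Om 0). eps x = 0}
                            else {x\<in>perm_module (Om i). d i x = (\<lambda>_. 0)})"

definition weak_linear_isoperimetric :: "nat \<Rightarrow> (nat \<Rightarrow> 'w set) \<Rightarrow> (nat \<Rightarrow> ('w \<Rightarrow> rat) \<Rightarrow> ('w \<Rightarrow> rat)) \<Rightarrow>
    (('w \<Rightarrow> rat) \<Rightarrow> rat) \<Rightarrow> bool" where
  "weak_linear_isoperimetric n Om d eps \<longleftrightarrow>
     (\<exists>C>0. \<forall>x\<in>ppr_kernel n Om d eps.
        (INF y\<in>{y\<in>perm_module (Om (Suc n)). d (Suc n) y = x}. l1_norm y) \<le> C * l1_norm x)"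

end

theory Submission
  imports Defs
begin

text \<open>
  Proper permutation modules are projective: a preimage of an equivariant map can be averaged
  over a compact open stabilizer, which acts through a finite quotient. Hence the identity of
  \<open>\<rat>\<close> lifts to chain maps \<open>\<alpha>\<close> from \<open>\<rat>[\<Omega>\<^sub>\<bullet>]\<close> to \<open>\<rat>[\<Lambda>\<^sub>\<bullet>]\<close> and \<open>\<beta>\<close> back, and \<open>\<beta>\<alpha>\<close> is
  chain homotopic to the identity via some \<open>h\<close>. Equivariant maps between permutation modules
  with finitely many orbits are bounded in the l1-norm. So an \<open>n\<close>-cycle \<open>x\<close> of \<open>\<rat>[\<Omega>\<^sub>\<bullet>]\<close>
  is filled by \<open>\<beta>(y) + h(x)\<close>, where \<open>y\<close> is a filling of \<open>\<alpha>(x)\<close> of norm at most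
  \<open>C\<close> times that of \<open>\<alpha>(x)\<close>.
\<close>

sublocale group_action \<subseteq> group
  by (rule group_hom.axioms(1)[OF group_hom])

definition basis_vec :: "'w \<Rightarrow> 'w \<Rightarrow> rat" where
  "basis_vec w = (\<lambda>v. if v = w then 1 else 0)"

definition lin_ext :: "('w \<Rightarrow> 'v \<Rightarrow> rat) \<Rightarrow> ('w \<Rightarrow> rat) \<Rightarrow> 'v \<Rightarrow> rat" where
  "lin_ext e x = (\<lambda>v. \<Sum>w\<in>{w. x w \<noteq> 0}. x w * e w v)"

lemma perm_module_iff:
  "x \<in> perm_module E \<longleftrightarrow> finite {w. x w \<noteq> 0} \<and> (\<forall>w. w \<notin> E \<longrightarrow> x w = 0)"
  unfolding perm_module_def by auto

lemma perm_module_zero [simp]: "(\<lambda>_. 0) \<in> perm_module E"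
  unfolding perm_module_iff by auto

lemma perm_module_add:
  "x \<in> perm_module E \<Longrightarrow> y \<in> perm_module E \<Longrightarrow> (\<lambda>w. x w + y w) \<in> perm_module E"
  unfolding perm_module_iff by (auto intro: finite_subset[of _ "{w. x w \<noteq> 0} \<union> {w. y w \<noteq> 0}"])

lemma perm_module_scale: "x \<in> perm_module E \<Longrightarrow> (\<lambda>w. c * x w) \<in> perm_module E"
  unfolding perm_module_iff by (auto intro: finite_subset[of _ "{w. x w \<noteq> 0}"])

lemma perm_module_diff:
  "x \<in> perm_module E \<Longrightarrow> y \<in> perm_module E \<Longrightarrow> (\<lambda>w. x w - y w) \<in> perm_module E"
  unfolding perm_module_iff by (auto intro: finite_subset[of _ "{w. x w \<noteq> 0} \<union> {w. y w \<noteq> 0}"])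

lemma perm_module_lincomb:
  assumes "finite S" "\<And>i. i \<in> S \<Longrightarrow> F i \<in> perm_module E"
  shows "(\<lambda>v. \<Sum>i\<in>S. c i * F i v) \<in> perm_module E"
  using assms
proof (induction S rule: finite_induct)
  case (insert a S)
  then have "(\<lambda>v. c a * F a v + (\<Sum>i\<in>S. c i * F i v)) \<in> perm_module E"
    by (intro perm_module_add perm_module_scale) auto
  with insert show ?case by simp
qed simp

lemma basis_vec_in_perm_module: "w \<in> E \<Longrightarrow> basis_vec w \<in> perm_module E"
  unfolding perm_module_iff basis_vec_def by auto

lemma lin_ext_superset:
  assumes "finite S" "{w. x w \<noteq> 0} \<subseteq> S"
  shows "lin_ext e x = (\<lambda>v. \<Sum>w\<in>S. x w * e w v)"
  unfolding lin_ext_def using assms by (intro ext sum.mono_neutral_left) auto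

lemma lin_ext_cong:
  "x \<in> perm_module E \<Longrightarrow> (\<And>w. w \<in> E \<Longrightarrow> e w = e' w) \<Longrightarrow> lin_ext e x = lin_ext e' x"
  unfolding lin_ext_def perm_module_iff by (metis (mono_tags, lifting) mem_Collect_eq sum.cong)

lemma lin_ext_basis_vec: "x \<in> perm_module E \<Longrightarrow> lin_ext basis_vec x = x"
proof
  fix v assume x: "x \<in> perm_module E"
  have "lin_ext basis_vec x v = (\<Sum>w\<in>{w. x w \<noteq> 0}. if w = v then x w else 0)"
    unfolding lin_ext_def by (rule sum.cong) (auto simp: basis_vec_def)
  also have "\<dots> = x v"
    using x unfolding perm_module_iff by (auto simp: sum.delta)
  finally show "lin_ext basis_vec x v = x v" .
qed

lemma lin_ext_in_perm_module:
  "x \<in> perm_module E \<Longrightarrow> (\<And>w. w \<in> E \<Longrightarrow> e w \<in> perm_module L) \<Longrightarrow> lin_ext e x \<in> perm_module L"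
  unfolding lin_ext_def by (intro perm_module_lincomb) (auto simp: perm_module_iff)

lemma perm_act_lincomb:
  "perm_act G E \<phi> g (\<lambda>v. \<Sum>i\<in>S. c i * F i v) = (\<lambda>v. \<Sum>i\<in>S. c i * perm_act G E \<phi> g (F i) v)"
  unfolding perm_act_def by auto

lemma perm_act_diff:
  "perm_act G E \<phi> g (\<lambda>v. x v - y v) = (\<lambda>v. perm_act G E \<phi> g x v - perm_act G E \<phi> g y v)"
  unfolding perm_act_def by auto

context group_action
begin

lemma act_inv_eq_iff:
  assumes "g \<in> carrier G" "x \<in> E" "y \<in> E"
  shows "\<phi> (inv g) y = x \<longleftrightarrow> y = \<phi> g x"
  using assms orbit_sym_aux[of g x] orbit_sym_aux[of "inv g" y] by (auto simp: inv_inv)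

lemma act_closed: "g \<in> carrier G \<Longrightarrow> x \<in> E \<Longrightarrow> \<phi> g x \<in> E"
  using element_image by blast

lemma perm_act_apply_act:
  "g \<in> carrier G \<Longrightarrow> w \<in> E \<Longrightarrow> perm_act G E \<phi> g y (\<phi> g w) = y w"
  using act_closed orbit_sym_aux by (simp add: perm_act_def)

lemma support_perm_act:
  assumes "g \<in> carrier G"
  shows "{w. perm_act G E \<phi> g y w \<noteq> 0} \<subseteq> \<phi> g ` ({w. y w \<noteq> 0} \<inter> E)"
proof
  fix w assume "w \<in> {w. perm_act G E \<phi> g y w \<noteq> 0}"
  then have w: "w \<in> E" "y (\<phi> (inv g) w) \<noteq> 0" by (auto simp: perm_act_def split: if_splits)
  moreover have "\<phi> (inv g) w \<in> E" using assms w act_closed by blast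
  ultimately show "w \<in> \<phi> g ` ({w. y w \<noteq> 0} \<inter> E)" using assms act_inv_eq_iff by blast
qed

lemma perm_act_in_perm_module:
  assumes "g \<in> carrier G" "x \<in> perm_module E"
  shows "perm_act G E \<phi> g x \<in> perm_module E"
proof -
  have "finite (\<phi> g ` ({w. x w \<noteq> 0} \<inter> E))" using assms(2) unfolding perm_module_iff by auto
  then have "finite {w. perm_act G E \<phi> g x w \<noteq> 0}"
    using support_perm_act[OF assms(1)] finite_subset by blast
  then show ?thesis unfolding perm_module_iff by (simp add: perm_act_def)
qed

lemma perm_act_basis_vec:
  "g \<in> carrier G \<Longrightarrow> w \<in> E \<Longrightarrow> perm_act G E \<phi> g (basis_vec w) = basis_vec (\<phi> g w)"
  unfolding perm_act_def basis_vec_def using act_inv_eq_iff act_closed by (auto intro!: ext)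

lemma perm_act_mult:
  assumes "a \<in> carrier G" "b \<in> carrier G"
  shows "perm_act G E \<phi> (a \<otimes> b) y = perm_act G E \<phi> a (perm_act G E \<phi> b y)"
proof -
  have "\<phi> (inv (a \<otimes> b)) w = \<phi> (inv b) (\<phi> (inv a) w)" if "w \<in> E" for w
    using assms that by (simp add: inv_mult_group composition_rule)
  then show ?thesis
    unfolding perm_act_def using assms act_closed by (auto intro!: ext)
qed

lemma perm_act_one:
  assumes "y \<in> perm_module E"
  shows "perm_act G E \<phi> \<one> y = y"
proof -
  have "\<phi> \<one> w = w" if "w \<in> E" for w
    by (metis id_eq_one restrict_apply' that)
  then show ?thesis using assms unfolding perm_act_def perm_module_iff by auto
qed

lemma perm_act_inv_cancel:
  "g \<in> carrier G \<Longrightarrow> y \<in> perm_module E \<Longrightarrow> perm_act G E \<phi> (inv g) (perm_act G E \<phi> g y) = y"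
  by (simp add: perm_act_mult[symmetric] perm_act_one)

lemma perm_act_fixed:
  assumes u: "u \<in> carrier G" and m: "m \<in> perm_module E"
    and fix_supp: "\<And>v. m v \<noteq> 0 \<Longrightarrow> \<phi> u v = v"
  shows "perm_act G E \<phi> u m = m"
proof
  fix w
  show "perm_act G E \<phi> u m w = m w"
  proof (cases "w \<in> E")
    case True
    have "m (\<phi> (inv u) w) = m w"
    proof (cases "m (\<phi> (inv u) w) = 0")
      case False
      have "w = \<phi> u (\<phi> (inv u) w)"
        using orbit_sym_aux[OF inv_closed[OF u] True refl] u by simp
      also have "\<dots> = \<phi> (inv u) w" using fix_supp[OF False] .
      finally show ?thesis by simp
    next
      case True
      have "m w = 0"
      proof (rule ccontr)
        assume "m w \<noteq> 0"
        then have "\<phi> (inv u) w = w" using fix_supp \<open>w \<in> E\<close> u act_inv_eq_iff by auto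
        with True \<open>m w \<noteq> 0\<close> show False by simp
      qed
      with True show ?thesis by simp
    qed
    then show ?thesis using True by (simp add: perm_act_def)
  qed (use m in \<open>simp add: perm_act_def perm_module_iff\<close>)
qed

end

lemma l1_norm_superset:
  assumes "finite S" "{w. x w \<noteq> 0} \<subseteq> S"
  shows "l1_norm x = (\<Sum>w\<in>S. \<bar>real_of_rat (x w)\<bar>)"
  unfolding l1_norm_def using assms by (intro sum.mono_neutral_left) auto

lemma l1_norm_nonneg: "l1_norm x \<ge> 0"
  unfolding l1_norm_def by (simp add: sum_nonneg)

lemma bdd_below_l1_norm: "bdd_below (l1_norm ` A)"
  by (rule bdd_belowI[of _ 0]) (auto simp: l1_norm_nonneg)

lemma l1_norm_add_le:
  assumes "finite {w. x w \<noteq> 0}" "finite {w. y w \<noteq> 0}"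
  shows "l1_norm (\<lambda>w. x w + y w) \<le> l1_norm x + l1_norm y"
proof -
  let ?S = "{w. x w \<noteq> 0} \<union> {w. y w \<noteq> 0}"
  have "l1_norm (\<lambda>w. x w + y w) = (\<Sum>w\<in>?S. \<bar>real_of_rat (x w + y w)\<bar>)"
    using assms by (intro l1_norm_superset) auto
  also have "\<dots> \<le> (\<Sum>w\<in>?S. \<bar>real_of_rat (x w)\<bar> + \<bar>real_of_rat (y w)\<bar>)"
    by (intro sum_mono) (metis abs_triangle_ineq of_rat_add)
  also have "\<dots> = l1_norm x + l1_norm y"
    using assms by (simp add: sum.distrib l1_norm_superset[of ?S])
  finally show ?thesis .
qed

lemma l1_norm_scale:
  "l1_norm (\<lambda>w. c * x w) = \<bar>real_of_rat c\<bar> * l1_norm x"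
proof (cases "c = 0")
  case False
  then have "{w. c * x w \<noteq> 0} = {w. x w \<noteq> 0}" by auto
  then show ?thesis
    by (simp add: l1_norm_def sum_distrib_left of_rat_mult abs_mult)
qed (simp add: l1_norm_def)

lemma l1_norm_lincomb_le:
  assumes "finite S" "\<And>i. i \<in> S \<Longrightarrow> F i \<in> perm_module E"
  shows "l1_norm (\<lambda>v. \<Sum>i\<in>S. c i * F i v) \<le> (\<Sum>i\<in>S. \<bar>real_of_rat (c i)\<bar> * l1_norm (F i))"
  using assms
proof (induction S rule: finite_induct)
  case (insert a S)
  have "F a \<in> perm_module E" "(\<lambda>v. \<Sum>i\<in>S. c i * F i v) \<in> perm_module E"
    using insert by (auto intro: perm_module_lincomb)
  then have "l1_norm (\<lambda>v. c a * F a v + (\<Sum>i\<in>S. c i * F i v))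
      \<le> l1_norm (\<lambda>v. c a * F a v) + l1_norm (\<lambda>v. \<Sum>i\<in>S. c i * F i v)"
    by (intro l1_norm_add_le) (auto simp: perm_module_iff intro: finite_subset[of _ "{w. F a w \<noteq> 0}"])
  also have "\<dots> \<le> \<bar>real_of_rat (c a)\<bar> * l1_norm (F a) + (\<Sum>i\<in>S. \<bar>real_of_rat (c i)\<bar> * l1_norm (F i))"
    using insert by (simp add: l1_norm_scale)
  finally show ?case using insert by simp
qed (simp add: l1_norm_def)

lemma l1_norm_lin_ext_le:
  assumes "x \<in> perm_module E" "\<And>w. w \<in> E \<Longrightarrow> e w \<in> perm_module L"
  shows "l1_norm (lin_ext e x) \<le> (\<Sum>w\<in>{w. x w \<noteq> 0}. \<bar>real_of_rat (x w)\<bar> * l1_norm (e w))"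
  unfolding lin_ext_def using assms by (intro l1_norm_lincomb_le) (auto simp: perm_module_iff)

lemma (in group_action) l1_norm_perm_act:
  assumes "g \<in> carrier G" "y \<in> perm_module E"
  shows "l1_norm (perm_act G E \<phi> g y) = l1_norm y"
proof -
  let ?S = "{w. y w \<noteq> 0}"
  have SE: "?S \<subseteq> E" and fin: "finite ?S" using assms(2) unfolding perm_module_iff by auto
  have "l1_norm (perm_act G E \<phi> g y) = (\<Sum>w\<in>\<phi> g ` ?S. \<bar>real_of_rat (perm_act G E \<phi> g y w)\<bar>)"
    using fin support_perm_act[OF assms(1), of y] SE by (intro l1_norm_superset) auto
  also have "\<dots> = (\<Sum>w\<in>?S. \<bar>real_of_rat (perm_act G E \<phi> g y (\<phi> g w))\<bar>)"
    using inj_on_subset[OF inj_prop[OF assms(1)] SE] by (simp add: sum.reindex)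
  also have "\<dots> = l1_norm y"
    unfolding l1_norm_def using SE assms(1) by (intro sum.cong) (auto simp: perm_act_apply_act)
  finally show ?thesis .
qed

section \<open>Equivariant maps between permutation modules\<close>

lemma perm_hom_closed: "perm_hom G E1 a1 E2 a2 f \<Longrightarrow> x \<in> perm_module E1 \<Longrightarrow> f x \<in> perm_module E2"
  unfolding perm_hom_def by auto

lemma perm_hom_add:
  "perm_hom G E1 a1 E2 a2 f \<Longrightarrow> x \<in> perm_module E1 \<Longrightarrow> y \<in> perm_module E1 \<Longrightarrow>
    f (\<lambda>w. x w + y w) = (\<lambda>w. f x w + f y w)"
  unfolding perm_hom_def by auto

lemma perm_hom_scale:
  "perm_hom G E1 a1 E2 a2 f \<Longrightarrow> x \<in> perm_module E1 \<Longrightarrow> f (\<lambda>w. c * x w) = (\<lambda>w. c * f x w)"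
  unfolding perm_hom_def by auto

lemma perm_hom_equivariant:
  "perm_hom G E1 a1 E2 a2 f \<Longrightarrow> g \<in> carrier G \<Longrightarrow> x \<in> perm_module E1 \<Longrightarrow>
    f (perm_act G E1 a1 g x) = perm_act G E2 a2 g (f x)"
  unfolding perm_hom_def by auto

lemma perm_hom_zero: "perm_hom G E1 a1 E2 a2 f \<Longrightarrow> f (\<lambda>_. 0) = (\<lambda>_. 0)"
  using perm_hom_scale[of G E1 a1 E2 a2 f "\<lambda>_. 0" 0] by simp

lemma perm_hom_diff:
  assumes f: "perm_hom G E1 a1 E2 a2 f" and x: "x \<in> perm_module E1" and y: "y \<in> perm_module E1"
  shows "f (\<lambda>w. x w - y w) = (\<lambda>w. f x w - f y w)"
proof -
  have "f (\<lambda>w. x w + (-1) * y w) = (\<lambda>w. f x w + f (\<lambda>w. (-1) * y w) w)"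
    by (rule perm_hom_add[OF f x perm_module_scale[OF y]])
  also have "\<dots> = (\<lambda>w. f x w + (-1) * f y w)"
    by (simp only: perm_hom_scale[OF f y])
  finally show ?thesis by simp
qed

lemma perm_hom_lincomb:
  assumes f: "perm_hom G E1 a1 E2 a2 f" and "finite S" "\<And>i. i \<in> S \<Longrightarrow> F i \<in> perm_module E1"
  shows "f (\<lambda>v. \<Sum>i\<in>S. c i * F i v) = (\<lambda>u. \<Sum>i\<in>S. c i * f (F i) u)"
  using assms(2,3)
proof (induction S rule: finite_induct)
  case (insert a S)
  have "f (\<lambda>v. c a * F a v + (\<Sum>i\<in>S. c i * F i v))
      = (\<lambda>u. f (\<lambda>v. c a * F a v) u + f (\<lambda>v. \<Sum>i\<in>S. c i * F i v) u)"
    using insert by (intro perm_hom_add[OF f] perm_module_scale perm_module_lincomb) auto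
  with insert show ?case by (simp add: perm_hom_scale[OF f])
qed (simp add: perm_hom_zero[OF f])

lemma perm_hom_lin_ext:
  assumes f: "perm_hom G E1 a1 E2 a2 f" and x: "x \<in> perm_module E"
    and e: "\<And>w. w \<in> E \<Longrightarrow> e w \<in> perm_module E1"
  shows "f (lin_ext e x) = lin_ext (\<lambda>w. f (e w)) x"
  unfolding lin_ext_def using x e by (intro perm_hom_lincomb[OF f]) (auto simp: perm_module_iff)

lemma perm_hom_eq_lin_ext:
  assumes "perm_hom G E a1 E2 a2 f" "x \<in> perm_module E"
  shows "f x = lin_ext (\<lambda>w. f (basis_vec w)) x"
proof -
  have "f (lin_ext basis_vec x) = lin_ext (\<lambda>w. f (basis_vec w)) x"
    by (rule perm_hom_lin_ext[OF assms]) (rule basis_vec_in_perm_module)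
  then show ?thesis by (simp add: lin_ext_basis_vec[OF assms(2)])
qed

lemma (in group_action) perm_hom_basis_vec_act:
  "perm_hom G E \<phi> E2 \<psi> f \<Longrightarrow> g \<in> carrier G \<Longrightarrow> w \<in> E \<Longrightarrow>
    f (basis_vec (\<phi> g w)) = perm_act G E2 \<psi> g (f (basis_vec w))"
  by (simp add: perm_act_basis_vec[symmetric] perm_hom_equivariant basis_vec_in_perm_module)

lemma perm_hom_comp:
  "perm_hom G E1 a1 E2 a2 f \<Longrightarrow> perm_hom G E2 a2 E3 a3 g \<Longrightarrow> perm_hom G E1 a1 E3 a3 (\<lambda>x. g (f x))"
  unfolding perm_hom_def by (auto simp: perm_module_add perm_module_scale)

lemma perm_hom_id: "perm_hom G E a E a (\<lambda>x. x)"
  unfolding perm_hom_def by auto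

lemma perm_hom_minus:
  "perm_hom G E1 a1 E2 a2 f \<Longrightarrow> perm_hom G E1 a1 E2 a2 g \<Longrightarrow>
    perm_hom G E1 a1 E2 a2 (\<lambda>x w. f x w - g x w)"
  unfolding perm_hom_def by (auto simp: perm_module_diff perm_act_diff algebra_simps)

text \<open>The augmentation is a map into the permutation module on one point, which is \<open>\<rat>\<close>
  with the trivial action.\<close>

lemma aug_hom_imp_perm_hom:
  "aug_hom G E act eps \<Longrightarrow> perm_hom G E act (UNIV :: unit set) (\<lambda>g u. u) (\<lambda>x u. eps x)"
  unfolding aug_hom_def perm_hom_def perm_act_def perm_module_iff by auto

lemma aug_hom_diff:
  assumes "aug_hom G E act eps" "x \<in> perm_module E" "y \<in> perm_module E"
  shows "eps (\<lambda>w. x w - y w) = eps x - eps y"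
  using fun_cong[OF perm_hom_diff[OF aug_hom_imp_perm_hom[OF assms(1)] assms(2,3)]] by simp

lemma lin_ext_perm_hom:
  assumes E: "group_action G E \<phi>"
    and e: "\<And>w. w \<in> E \<Longrightarrow> e w \<in> perm_module L"
    and equiv: "\<And>g w. g \<in> carrier G \<Longrightarrow> w \<in> E \<Longrightarrow> e (\<phi> g w) = perm_act G L \<psi> g (e w)"
  shows "perm_hom G E \<phi> L \<psi> (lin_ext e)"
  unfolding perm_hom_def
proof (intro conjI ballI allI)
  interpret group_action G E \<phi> by (rule E)
  fix x assume "x \<in> perm_module E"
  then show "lin_ext e x \<in> perm_module L" using e by (rule lin_ext_in_perm_module)
next
  fix x y assume x: "x \<in> perm_module E" and y: "y \<in> perm_module E"
  let ?S = "{w. x w \<noteq> 0} \<union> {w. y w \<noteq> 0}"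
  have fin: "finite ?S" using x y unfolding perm_module_iff by auto
  have "{w. x w + y w \<noteq> 0} \<subseteq> ?S" "{w. x w \<noteq> 0} \<subseteq> ?S" "{w. y w \<noteq> 0} \<subseteq> ?S" by auto
  then show "lin_ext e (\<lambda>w. x w + y w) = (\<lambda>w. lin_ext e x w + lin_ext e y w)"
    by (simp only: lin_ext_superset[OF fin]) (simp add: distrib_right sum.distrib)
next
  fix c x assume x: "x \<in> perm_module E"
  have fin: "finite {w. x w \<noteq> 0}" using x unfolding perm_module_iff by auto
  have "{w. c * x w \<noteq> 0} \<subseteq> {w. x w \<noteq> 0}" by auto
  then show "lin_ext e (\<lambda>w. c * x w) = (\<lambda>w. c * lin_ext e x w)"
    by (simp only: lin_ext_superset[OF fin] order_refl) (simp add: sum_distrib_left mult.assoc)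
next
  interpret group_action G E \<phi> by (rule E)
  fix h x assume h: "h \<in> carrier G" and x: "x \<in> perm_module E"
  let ?S = "{w. x w \<noteq> 0}"
  have fin: "finite ?S" and SE: "?S \<subseteq> E" using x unfolding perm_module_iff by auto
  have "lin_ext e (perm_act G E \<phi> h x) = (\<lambda>v. \<Sum>w\<in>\<phi> h ` ?S. perm_act G E \<phi> h x w * e w v)"
    using support_perm_act[OF h, of x] SE by (intro lin_ext_superset finite_imageI fin) auto
  also have "\<dots> = (\<lambda>v. \<Sum>w\<in>?S. perm_act G E \<phi> h x (\<phi> h w) * e (\<phi> h w) v)"
    using inj_on_subset[OF inj_prop[OF h] SE] by (simp add: sum.reindex)
  also have "\<dots> = (\<lambda>v. \<Sum>w\<in>?S. x w * perm_act G L \<psi> h (e w) v)"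
    using SE h by (intro ext sum.cong) (auto simp: perm_act_apply_act equiv)
  also have "\<dots> = perm_act G L \<psi> h (lin_ext e x)"
    unfolding lin_ext_def by (rule perm_act_lincomb[symmetric])
  finally show "lin_ext e (perm_act G E \<phi> h x) = perm_act G L \<psi> h (lin_ext e x)" .
qed

text \<open>The norm of the image of a basis vector is constant along orbits, so there are only
  finitely many such norms.\<close>

lemma perm_hom_l1_bounded:
  assumes E: "group_action G E \<phi>" and fin: "finite (orbits G E \<phi>)"
    and E2: "group_action G E2 \<psi>" and f: "perm_hom G E \<phi> E2 \<psi> f"
  obtains B where "B > 0" "\<And>x. x \<in> perm_module E \<Longrightarrow> l1_norm (f x) \<le> B * l1_norm x"
proof -
  interpret A: group_action G E \<phi> by (rule E)
  interpret A2: group_action G E2 \<psi> by (rule E2)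
  define N where "N w = l1_norm (f (basis_vec w))" for w
  have N_orbit: "N ` orbit G \<phi> w = {N w}" if "w \<in> E" for w
  proof -
    have "N (\<phi> g w) = N w" if "g \<in> carrier G" for g
      using that \<open>w \<in> E\<close> unfolding N_def
      by (simp add: A.perm_hom_basis_vec_act[OF f] A2.l1_norm_perm_act perm_hom_closed[OF f]
          basis_vec_in_perm_module)
    then show ?thesis using A.orbit_refl[OF that] unfolding orbit_def by blast
  qed
  have "N ` E \<subseteq> (\<lambda>Q. N (SOME v. v \<in> Q)) ` orbits G E \<phi>"
  proof
    fix y assume "y \<in> N ` E"
    then obtain w where w: "w \<in> E" "y = N w" by blast
    have "(SOME v. v \<in> orbit G \<phi> w) \<in> orbit G \<phi> w" using A.orbit_refl[OF w(1)] by (rule someI)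
    then have "N (SOME v. v \<in> orbit G \<phi> w) = y" using N_orbit[OF w(1)] w(2) by blast
    moreover have "orbit G \<phi> w \<in> orbits G E \<phi>" using w(1) unfolding orbits_def by blast
    ultimately show "y \<in> (\<lambda>Q. N (SOME v. v \<in> Q)) ` orbits G E \<phi>" by force
  qed
  with fin have finN: "finite (N ` E)" by (rule finite_surj)
  define B where "B = Max (insert 1 (N ` E))"
  have NB: "N w \<le> B" if "w \<in> E" for w unfolding B_def using finN that by simp
  have bound: "l1_norm (f x) \<le> B * l1_norm x" if x: "x \<in> perm_module E" for x
  proof -
    have SE: "{w. x w \<noteq> 0} \<subseteq> E" using x unfolding perm_module_iff by auto
    have "l1_norm (f x) \<le> (\<Sum>w\<in>{w. x w \<noteq> 0}. \<bar>real_of_rat (x w)\<bar> * N w)"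
      unfolding perm_hom_eq_lin_ext[OF f x] N_def using x
      by (intro l1_norm_lin_ext_le) (auto intro: perm_hom_closed[OF f] basis_vec_in_perm_module)
    also have "\<dots> \<le> (\<Sum>w\<in>{w. x w \<noteq> 0}. \<bar>real_of_rat (x w)\<bar> * B)"
      using SE NB by (intro sum_mono mult_left_mono) auto
    also have "\<dots> = B * l1_norm x" by (simp add: l1_norm_def sum_distrib_left mult.commute)
    finally show ?thesis .
  qed
  have "1 \<le> B" unfolding B_def using finN by (intro Max_ge) auto
  then show thesis using that[OF _ bound] by simp
qed

section \<open>Projectivity of proper permutation modules\<close>

lemma topological_group_left_mult_continuous:
  fixes G (structure)
  assumes tg: "topological_group G T" and a: "a \<in> carrier G"
  shows "continuous_map T T (\<lambda>x. a \<otimes> x)"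
proof -
  have ts: "topspace T = carrier G"
    and mult: "continuous_map (prod_topology T T) T (\<lambda>p. fst p \<otimes> snd p)"
    using tg unfolding topological_group_def by auto
  have "continuous_map T (prod_topology T T) (\<lambda>x. (a, x))"
    using a ts by (intro continuous_map_pairedI) (auto simp: continuous_map_id[unfolded id_def])
  from continuous_map_compose[OF this mult] show ?thesis by (simp add: o_def)
qed

lemma l_coset_openin:
  fixes G (structure)
  assumes tg: "topological_group G T" and U: "openin T U" "U \<subseteq> carrier G"
    and a: "a \<in> carrier G"
  shows "openin T (a <# U)"
proof -
  interpret group G using tg unfolding topological_group_def by auto
  have ts: "topspace T = carrier G" using tg unfolding topological_group_def by auto
  have "a <# U = {x \<in> topspace T. inv a \<otimes> x \<in> U}"
  proof (intro equalityI subsetI)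
    fix x assume "x \<in> a <# U"
    then obtain u where "u \<in> U" "x = a \<otimes> u" unfolding l_coset_def by auto
    then show "x \<in> {x \<in> topspace T. inv a \<otimes> x \<in> U}" using a U ts by (auto simp: m_assoc[symmetric])
  next
    fix x assume "x \<in> {x \<in> topspace T. inv a \<otimes> x \<in> U}"
    then have x: "x \<in> carrier G" "inv a \<otimes> x \<in> U" using ts by auto
    then have "x = a \<otimes> (inv a \<otimes> x)" using a by (simp add: m_assoc[symmetric])
    then show "x \<in> a <# U" using x unfolding l_coset_def by auto
  qed
  then show ?thesis
    using openin_continuous_map_preimage[OF topological_group_left_mult_continuous[OF tg inv_closed[OF a]] U(1)]
    by simp
qed

text \<open>The elements of \<open>G\<close> fixing the finite support of \<open>m\<close> form an open subgroup \<open>U\<close>, and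
  \<open>k \<cdot> m\<close> only depends on the coset \<open>k U\<close>; a compact set is covered by finitely many cosets.\<close>

lemma (in group_action) finite_perm_act_image_compact:
  assumes tg: "topological_group G T" and ostab: "\<And>v. v \<in> E \<Longrightarrow> openin T (stabilizer G \<phi> v)"
    and K: "K \<subseteq> carrier G" "compactin T K" and m: "m \<in> perm_module E"
  shows "finite ((\<lambda>k. perm_act G E \<phi> k m) ` K)"
proof -
  let ?S = "{v. m v \<noteq> 0}"
  have finS: "finite ?S" and SE: "?S \<subseteq> E" using m unfolding perm_module_iff by auto
  have ts: "topspace T = carrier G" using tg unfolding topological_group_def by auto
  define U where "U = \<Inter>(insert (carrier G) (stabilizer G \<phi> ` ?S))"
  have U_open: "openin T U"
    unfolding U_def using finS SE ostab openin_topspace[of T, unfolded ts] by (intro openin_Inter) auto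
  have UG: "U \<subseteq> carrier G" unfolding U_def by auto
  have U_fix: "perm_act G E \<phi> u m = m" if "u \<in> U" for u
    using that UG m by (intro perm_act_fixed) (auto simp: U_def stabilizer_def)
  have one_U: "\<one> \<in> U"
    unfolding U_def stabilizer_def using SE by (auto simp: id_eq_one[symmetric])
  have "\<forall>C\<in>(\<lambda>k. k <# U) ` K. openin T C"
    using l_coset_openin[OF tg U_open UG] K(1) by auto
  moreover have "K \<subseteq> \<Union>((\<lambda>k. k <# U) ` K)"
    using one_U K(1) unfolding l_coset_def by force
  ultimately obtain F where F: "finite F" "F \<subseteq> (\<lambda>k. k <# U) ` K" "K \<subseteq> \<Union>F"
    using K(2) unfolding compactin_def by meson
  then obtain K0 where K0: "K0 \<subseteq> K" "finite K0" "F = (\<lambda>k. k <# U) ` K0"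
    by (meson finite_subset_image)
  have "(\<lambda>k. perm_act G E \<phi> k m) ` K \<subseteq> (\<lambda>k. perm_act G E \<phi> k m) ` K0"
  proof
    fix z assume "z \<in> (\<lambda>k. perm_act G E \<phi> k m) ` K"
    then obtain k where k: "k \<in> K" "z = perm_act G E \<phi> k m" by blast
    then obtain k0 u where k0: "k0 \<in> K0" "u \<in> U" "k = k0 \<otimes> u"
      using F(3) K0(3) unfolding l_coset_def by blast
    have "k0 \<in> carrier G" "u \<in> carrier G" using k0 K0(1) K(1) UG by auto
    then have "z = perm_act G E \<phi> k0 (perm_act G E \<phi> u m)"
      using k(2) k0(3) by (simp add: perm_act_mult)
    then show "z \<in> (\<lambda>k. perm_act G E \<phi> k m) ` K0" using k0 U_fix by simp
  qed
  then show ?thesis using K0(2) finite_subset by blast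
qed

text \<open>Averaging over the finite orbit of a preimage under a compact subgroup.\<close>

lemma exists_invariant_preimage:
  assumes tg: "topological_group G T"
    and L: "group_action G L \<psi>" and ostab: "\<And>v. v \<in> L \<Longrightarrow> openin T (stabilizer G \<psi> v)"
    and p: "perm_hom G L \<psi> L2 \<psi>2 p"
    and K: "subgroup K G" "compactin T K"
    and m0: "m0 \<in> perm_module L" and fixed: "\<And>k. k \<in> K \<Longrightarrow> perm_act G L2 \<psi>2 k (p m0) = p m0"
  obtains m where "m \<in> perm_module L" "p m = p m0" "\<And>k. k \<in> K \<Longrightarrow> perm_act G L \<psi> k m = m"
proof -
  interpret group_action G L \<psi> by (rule L)
  have KG: "K \<subseteq> carrier G" using subgroup.subset[OF K(1)] .
  define Z where "Z = (\<lambda>k. perm_act G L \<psi> k m0) ` K"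
  define N where "N = (of_nat (card Z) :: rat)"
  define m where "m = (\<lambda>v. \<Sum>z\<in>Z. (1 / N) * z v)"
  have finZ: "finite Z"
    unfolding Z_def using finite_perm_act_image_compact[OF tg ostab KG K(2) m0] .
  have "Z \<noteq> {}" unfolding Z_def using subgroup.one_closed[OF K(1)] by blast
  then have N: "N \<noteq> 0" unfolding N_def using finZ by simp
  have Z: "z \<in> perm_module L" "p z = p m0" if "z \<in> Z" for z
    using that KG m0 fixed perm_hom_equivariant[OF p]
    unfolding Z_def by (auto intro: perm_act_in_perm_module)
  have "m \<in> perm_module L" unfolding m_def using finZ Z by (intro perm_module_lincomb) auto
  moreover have "p m = p m0"
  proof -
    have "p m = (\<lambda>u. \<Sum>z\<in>Z. (1 / N) * p z u)"
      unfolding m_def using finZ Z by (intro perm_hom_lincomb[OF p]) auto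
    also have "\<dots> = p m0" using Z N by (simp add: N_def)
    finally show ?thesis .
  qed
  moreover have "perm_act G L \<psi> k m = m" if k: "k \<in> K" for k
  proof -
    let ?f = "perm_act G L \<psi> k"
    have kG: "k \<in> carrier G" using k KG by blast
    have "?f ` Z \<subseteq> Z"
    proof
      fix z assume "z \<in> ?f ` Z"
      then obtain k' where k': "k' \<in> K" "z = ?f (perm_act G L \<psi> k' m0)" unfolding Z_def by blast
      then have "z = perm_act G L \<psi> (k \<otimes>\<^bsub>G\<^esub> k') m0" using kG KG by (auto simp: perm_act_mult)
      then show "z \<in> Z" unfolding Z_def using subgroup.m_closed[OF K(1) k k'(1)] by blast
    qed
    moreover have "inj_on ?f Z"
    proof (rule inj_onI)
      fix z z' assume "z \<in> Z" "z' \<in> Z" "?f z = ?f z'"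
      then show "z = z'" using perm_act_inv_cancel[OF kG Z(1)] by metis
    qed
    ultimately have perm_Z: "?f ` Z = Z" "inj_on ?f Z" using endo_inj_surj[OF finZ] by auto
    have "?f m = (\<lambda>v. \<Sum>z\<in>Z. (1 / N) * ?f z v)"
      unfolding m_def by (rule perm_act_lincomb)
    also have "\<dots> = (\<lambda>v. \<Sum>z\<in>?f ` Z. (1 / N) * z v)"
      using perm_Z(2) by (simp add: sum.reindex)
    also have "\<dots> = m" unfolding m_def perm_Z(1) ..
    finally show ?thesis .
  qed
  ultimately show thesis using that by blast
qed

lemma (in group_action) orbit_act_eq:
  assumes "h \<in> carrier G" "w \<in> E"
  shows "orbit G \<phi> (\<phi> h w) = orbit G \<phi> w"
proof (intro equalityI subsetI)
  fix x assume "x \<in> orbit G \<phi> (\<phi> h w)"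
  then obtain g where "g \<in> carrier G" "x = \<phi> g (\<phi> h w)" unfolding orbit_def by auto
  then show "x \<in> orbit G \<phi> w"
    using assms composition_rule unfolding orbit_def by (auto intro!: exI[of _ "g \<otimes> h"])
next
  fix x assume "x \<in> orbit G \<phi> w"
  then obtain g where g: "g \<in> carrier G" "x = \<phi> g w" unfolding orbit_def by auto
  have "\<phi> (g \<otimes> inv h) (\<phi> h w) = x"
    using composition_rule assms g act_closed orbit_sym_aux by simp
  then show "x \<in> orbit G \<phi> (\<phi> h w)" using g assms unfolding orbit_def
    by (auto intro!: exI[of _ "g \<otimes> inv h"])
qed

lemma (in group_action) exists_orbit_representatives:
  obtains r t where "\<And>w. w \<in> E \<Longrightarrow> r w \<in> E"
    "\<And>h w. h \<in> carrier G \<Longrightarrow> w \<in> E \<Longrightarrow> r (\<phi> h w) = r w"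
    "\<And>w. w \<in> E \<Longrightarrow> t w \<in> carrier G" "\<And>w. w \<in> E \<Longrightarrow> \<phi> (t w) (r w) = w"
proof -
  define r where "r w = (SOME v. v \<in> orbit G \<phi> w)" for w
  have r_orbit: "r w \<in> orbit G \<phi> w" if "w \<in> E" for w
    unfolding r_def using orbit_refl[OF that] by (rule someI)
  have r_in: "r w \<in> E" if "w \<in> E" for w
    using r_orbit[OF that] that unfolding orbit_def by (auto intro: act_closed)
  have r_act: "r (\<phi> h w) = r w" if "h \<in> carrier G" "w \<in> E" for h w
    unfolding r_def using orbit_act_eq[OF that] by simp
  define t where "t w = (SOME g. g \<in> carrier G \<and> \<phi> g (r w) = w)" for w
  have t: "t w \<in> carrier G \<and> \<phi> (t w) (r w) = w" if "w \<in> E" for w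
  proof -
    have "w \<in> orbit G \<phi> (r w)" using orbit_sym[OF that r_in[OF that] r_orbit[OF that]] .
    then have "\<exists>g. g \<in> carrier G \<and> \<phi> g (r w) = w" unfolding orbit_def by auto
    then show ?thesis unfolding t_def by (rule someI_ex)
  qed
  show thesis using that[of r t] r_in r_act t by blast
qed

text \<open>An equivariant choice of elements: chosen on orbit representatives, where it must be
  invariant under the stabilizer, and transported to the rest of the orbit by the action.\<close>

lemma (in group_action) exists_equivariant_family:
  assumes L: "group_action G L \<psi>"
    and inv: "\<And>w. w \<in> E \<Longrightarrow>
      \<exists>m\<in>perm_module L. P w m \<and> (\<forall>k\<in>stabilizer G \<phi> w. perm_act G L \<psi> k m = m)"
    and compat: "\<And>g w m. g \<in> carrier G \<Longrightarrow> w \<in> E \<Longrightarrow> m \<in> perm_module L \<Longrightarrow> P w m \<Longrightarrow>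
      P (\<phi> g w) (perm_act G L \<psi> g m)"
  obtains e where "\<And>w. w \<in> E \<Longrightarrow> e w \<in> perm_module L" "\<And>w. w \<in> E \<Longrightarrow> P w (e w)"
    "\<And>g w. g \<in> carrier G \<Longrightarrow> w \<in> E \<Longrightarrow> e (\<phi> g w) = perm_act G L \<psi> g (e w)"
proof -
  interpret L: group_action G L \<psi> by (rule L)
  obtain r t where r_in: "\<And>w. w \<in> E \<Longrightarrow> r w \<in> E"
    and r_act: "\<And>h w. h \<in> carrier G \<Longrightarrow> w \<in> E \<Longrightarrow> r (\<phi> h w) = r w"
    and t: "\<And>w. w \<in> E \<Longrightarrow> t w \<in> carrier G" "\<And>w. w \<in> E \<Longrightarrow> \<phi> (t w) (r w) = w"
    using exists_orbit_representatives by blast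
  define M where "M w = (SOME m. m \<in> perm_module L \<and> P w m \<and>
      (\<forall>k\<in>stabilizer G \<phi> w. perm_act G L \<psi> k m = m))" for w
  have M: "M w \<in> perm_module L" "P w (M w)" "\<And>k. k \<in> stabilizer G \<phi> w \<Longrightarrow> perm_act G L \<psi> k (M w) = M w"
    if "w \<in> E" for w
    using someI_ex[OF inv[OF that, unfolded Bex_def]] unfolding M_def by blast+
  define e where "e w = perm_act G L \<psi> (t w) (M (r w))" for w
  have "e w \<in> perm_module L" if "w \<in> E" for w
    unfolding e_def using that t M r_in by (auto intro: L.perm_act_in_perm_module)
  moreover have "P w (e w)" if "w \<in> E" for w
  proof -
    have "P (\<phi> (t w) (r w)) (e w)"
      unfolding e_def using that by (intro compat t r_in M)
    then show ?thesis using t(2)[OF that] by simp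
  qed
  moreover have "e (\<phi> h w) = perm_act G L \<psi> h (e w)" if h: "h \<in> carrier G" and w: "w \<in> E" for h w
  proof -
    let ?w' = "\<phi> h w" and ?\<rho> = "r w"
    have w': "?w' \<in> E" and \<rho>: "?\<rho> \<in> E" and r_w': "r ?w' = ?\<rho>"
      using act_closed h w r_in r_act by auto
    define k where "k = inv (h \<otimes> t w) \<otimes> t ?w'"
    have kG: "k \<in> carrier G" unfolding k_def using h t w w' by auto
    have "\<phi> k ?\<rho> = \<phi> (inv (h \<otimes> t w)) (\<phi> (h \<otimes> t w) ?\<rho>)"
      unfolding k_def using h t[OF w] t[OF w'] r_w' \<rho> by (simp add: composition_rule)
    also have "\<dots> = ?\<rho>" using orbit_sym_aux h t[OF w] \<rho> by auto
    finally have k_stab: "k \<in> stabilizer G \<phi> ?\<rho>" using kG unfolding stabilizer_def by auto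
    have "t ?w' = (h \<otimes> t w) \<otimes> k" unfolding k_def using h t w w'
      by (simp add: m_assoc[symmetric])
    then have "e ?w' = perm_act G L \<psi> (h \<otimes> t w) (perm_act G L \<psi> k (M ?\<rho>))"
      unfolding e_def r_w' using h t[OF w] kG by (simp add: L.perm_act_mult)
    also have "\<dots> = perm_act G L \<psi> h (e w)"
      unfolding e_def using M(3)[OF \<rho> k_stab] h t[OF w] by (simp add: L.perm_act_mult)
    finally show ?thesis .
  qed
  ultimately show thesis using that by blast
qed

lemma exists_stabilizer_invariant_lift:
  assumes tg: "topological_group G T"
    and E: "proper_G_set G T E \<phi>" and L: "proper_G_set G T L \<psi>"
    and p: "perm_hom G L \<psi> L2 \<psi>2 p" and f: "perm_hom G E \<phi> L2 \<psi>2 f"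
    and img: "f (basis_vec w) \<in> p ` perm_module L" and w: "w \<in> E"
  shows "\<exists>m\<in>perm_module L. p m = f (basis_vec w) \<and>
    (\<forall>k\<in>stabilizer G \<phi> w. perm_act G L \<psi> k m = m)"
proof -
  interpret E: group_action G E \<phi> using E unfolding proper_G_set_def by auto
  interpret L: group_action G L \<psi> using L unfolding proper_G_set_def by auto
  have ostab: "\<And>v. v \<in> L \<Longrightarrow> openin T (stabilizer G \<psi> v)"
    using L unfolding proper_G_set_def by auto
  have stab: "subgroup (stabilizer G \<phi> w) G" "compactin T (stabilizer G \<phi> w)"
    using E.stabilizer_subgroup w E unfolding proper_G_set_def by auto
  obtain m0 where m0: "m0 \<in> perm_module L" "p m0 = f (basis_vec w)"
    using img by (metis imageE)
  have fixed: "perm_act G L2 \<psi>2 k (p m0) = p m0" if "k \<in> stabilizer G \<phi> w" for k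
  proof -
    have k: "k \<in> carrier G" "\<phi> k w = w" using that unfolding stabilizer_def by auto
    have "perm_act G L2 \<psi>2 k (p m0) = f (basis_vec (\<phi> k w))"
      using E.perm_hom_basis_vec_act[OF f k(1) w] m0(2) by simp
    then show ?thesis using k(2) m0(2) by simp
  qed
  obtain m where "m \<in> perm_module L" "p m = p m0"
    "\<And>k. k \<in> stabilizer G \<phi> w \<Longrightarrow> perm_act G L \<psi> k m = m"
    using exists_invariant_preimage[OF tg L.group_action_axioms ostab p stab m0(1) fixed] by blast
  then show ?thesis using m0(2) by auto
qed

lemma perm_hom_lift:
  assumes tg: "topological_group G T"
    and E: "proper_G_set G T E \<phi>" and L: "proper_G_set G T L \<psi>"
    and p: "perm_hom G L \<psi> L2 \<psi>2 p" and f: "perm_hom G E \<phi> L2 \<psi>2 f"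
    and img: "\<And>x. x \<in> perm_module E \<Longrightarrow> f x \<in> p ` perm_module L"
  obtains \<alpha> where "perm_hom G E \<phi> L \<psi> \<alpha>" "\<And>x. x \<in> perm_module E \<Longrightarrow> p (\<alpha> x) = f x"
proof -
  interpret E: group_action G E \<phi> using E unfolding proper_G_set_def by auto
  interpret L: group_action G L \<psi> using L unfolding proper_G_set_def by auto
  have inv: "\<exists>m\<in>perm_module L. p m = f (basis_vec w) \<and>
      (\<forall>k\<in>stabilizer G \<phi> w. perm_act G L \<psi> k m = m)" if "w \<in> E" for w
    using exists_stabilizer_invariant_lift[OF tg E L p f img[OF basis_vec_in_perm_module] that] that .
  have compat: "p (perm_act G L \<psi> g m) = f (basis_vec (\<phi> g w))"
    if "g \<in> carrier G" "w \<in> E" "m \<in> perm_module L" "p m = f (basis_vec w)" for g w m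
    using that E.perm_hom_basis_vec_act[OF f] perm_hom_equivariant[OF p] by simp
  obtain e where e: "\<And>w. w \<in> E \<Longrightarrow> e w \<in> perm_module L"
    "\<And>w. w \<in> E \<Longrightarrow> p (e w) = f (basis_vec w)"
    "\<And>g w. g \<in> carrier G \<Longrightarrow> w \<in> E \<Longrightarrow> e (\<phi> g w) = perm_act G L \<psi> g (e w)"
    using E.exists_equivariant_family[OF L.group_action_axioms,
        where P = "\<lambda>w m. p m = f (basis_vec w)", OF inv compat] by blast
  have "p (lin_ext e x) = f x" if x: "x \<in> perm_module E" for x
  proof -
    have "p (lin_ext e x) = lin_ext (\<lambda>w. p (e w)) x" by (rule perm_hom_lin_ext[OF p x e(1)])
    also have "\<dots> = lin_ext (\<lambda>w. f (basis_vec w)) x" using x e(2) by (rule lin_ext_cong)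
    also have "\<dots> = f x" using perm_hom_eq_lin_ext[OF f x] by simp
    finally show ?thesis .
  qed
  with lin_ext_perm_hom[OF E.group_action_axioms e(1,3)] show thesis using that by blast
qed

section \<open>Comparison of resolutions\<close>

locale partial_resolution =
  fixes G :: "('g, 'm) monoid_scheme" and T :: "'g topology" and n :: nat
    and Om :: "nat \<Rightarrow> 'w set" and act :: "nat \<Rightarrow> 'g \<Rightarrow> 'w \<Rightarrow> 'w"
    and d :: "nat \<Rightarrow> ('w \<Rightarrow> rat) \<Rightarrow> ('w \<Rightarrow> rat)" and eps :: "('w \<Rightarrow> rat) \<Rightarrow> rat"
  assumes resolution: "partial_ppr G T n Om act d eps"
begin

lemma proper: "i \<le> Suc n \<Longrightarrow> proper_G_set G T (Om i) (act i)"
  using resolution unfolding partial_ppr_def by auto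

lemma finite_orbits: "i \<le> Suc n \<Longrightarrow> finite (orbits G (Om i) (act i))"
  using resolution unfolding partial_ppr_def by auto

lemma group_action: "i \<le> Suc n \<Longrightarrow> group_action G (Om i) (act i)"
  using proper unfolding proper_G_set_def by auto

lemma d_hom:
  assumes "i \<le> n"
  shows "perm_hom G (Om (Suc i)) (act (Suc i)) (Om i) (act i) (d (Suc i))"
proof -
  have "Suc i \<in> {1..Suc n}" using assms by simp
  then have "perm_hom G (Om (Suc i)) (act (Suc i)) (Om (Suc i - 1)) (act (Suc i - 1)) (d (Suc i))"
    using resolution unfolding partial_ppr_def by blast
  then show ?thesis by simp
qed

lemma aug: "aug_hom G (Om 0) (act 0) eps"
  using resolution unfolding partial_ppr_def by auto

lemma aug_surj: "\<exists>y\<in>perm_module (Om 0). eps y = c"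
proof -
  have "c \<in> eps ` perm_module (Om 0)" using resolution unfolding partial_ppr_def by simp
  then show ?thesis by (metis imageE)
qed

lemma kernel_subset: "ppr_kernel i Om d eps \<subseteq> perm_module (Om i)"
  unfolding ppr_kernel_def by auto

lemma kernel_eq_image:
  assumes "i \<le> n"
  shows "ppr_kernel i Om d eps = d (Suc i) ` perm_module (Om (Suc i))"
proof (cases "i = 0")
  case True
  then show ?thesis using resolution unfolding partial_ppr_def ppr_kernel_def by simp
next
  case False
  then have "i \<in> {1..n}" using assms by simp
  then show ?thesis using resolution False unfolding partial_ppr_def ppr_kernel_def by simp
qed

lemma boundary_in_kernel:
  "i \<le> n \<Longrightarrow> x \<in> perm_module (Om (Suc i)) \<Longrightarrow> d (Suc i) x \<in> ppr_kernel i Om d eps"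
  using kernel_eq_image by blast

end

definition chain_map_upto :: "('g, 'm) monoid_scheme \<Rightarrow> nat \<Rightarrow>
    (nat \<Rightarrow> 'w set) \<Rightarrow> (nat \<Rightarrow> 'g \<Rightarrow> 'w \<Rightarrow> 'w) \<Rightarrow>
    (nat \<Rightarrow> ('w \<Rightarrow> rat) \<Rightarrow> ('w \<Rightarrow> rat)) \<Rightarrow> (('w \<Rightarrow> rat) \<Rightarrow> rat) \<Rightarrow>
    (nat \<Rightarrow> 'v set) \<Rightarrow> (nat \<Rightarrow> 'g \<Rightarrow> 'v \<Rightarrow> 'v) \<Rightarrow>
    (nat \<Rightarrow> ('v \<Rightarrow> rat) \<Rightarrow> ('v \<Rightarrow> rat)) \<Rightarrow> (('v \<Rightarrow> rat) \<Rightarrow> rat) \<Rightarrow>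
    (nat \<Rightarrow> ('w \<Rightarrow> rat) \<Rightarrow> ('v \<Rightarrow> rat)) \<Rightarrow> bool" where
  "chain_map_upto G k Om actO d epsO La actL delta epsL \<alpha> \<longleftrightarrow>
     (\<forall>i\<le>k. perm_hom G (Om i) (actO i) (La i) (actL i) (\<alpha> i)) \<and>
     (\<forall>x\<in>perm_module (Om 0). epsL (\<alpha> 0 x) = epsO x) \<and>
     (\<forall>i\<in>{1..k}. \<forall>x\<in>perm_module (Om i). delta i (\<alpha> i x) = \<alpha> (i - 1) (d i x))"

lemma chain_map_upto_mono:
  "chain_map_upto G k Om actO d epsO La actL delta epsL \<alpha> \<Longrightarrow> j \<le> k \<Longrightarrow>
    chain_map_upto G j Om actO d epsO La actL delta epsL \<alpha>"
  unfolding chain_map_upto_def by auto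

lemma chain_map_upto_comp:
  assumes \<alpha>: "chain_map_upto G k Om actO d epsO La actL delta epsL \<alpha>"
    and \<beta>: "chain_map_upto G k La actL delta epsL Xi actX dX epsX \<beta>"
  shows "chain_map_upto G k Om actO d epsO Xi actX dX epsX (\<lambda>i x. \<beta> i (\<alpha> i x))"
  unfolding chain_map_upto_def
proof (intro conjI ballI allI impI)
  have hom_\<alpha>: "perm_hom G (Om i) (actO i) (La i) (actL i) (\<alpha> i)" if "i \<le> k" for i
    using \<alpha> that unfolding chain_map_upto_def by auto
  have hom_\<beta>: "perm_hom G (La i) (actL i) (Xi i) (actX i) (\<beta> i)" if "i \<le> k" for i
    using \<beta> that unfolding chain_map_upto_def by auto
  show "perm_hom G (Om i) (actO i) (Xi i) (actX i) (\<lambda>x. \<beta> i (\<alpha> i x))" if "i \<le> k" for i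
    by (rule perm_hom_comp[OF hom_\<alpha>[OF that] hom_\<beta>[OF that]])
  show "epsX (\<beta> 0 (\<alpha> 0 x)) = epsO x" if "x \<in> perm_module (Om 0)" for x
    using \<alpha> \<beta> that perm_hom_closed[OF hom_\<alpha> that] unfolding chain_map_upto_def by simp
  show "dX i (\<beta> i (\<alpha> i x)) = \<beta> (i - 1) (\<alpha> (i - 1) (d i x))"
    if "i \<in> {1..k}" "x \<in> perm_module (Om i)" for i x
    using \<alpha> \<beta> that perm_hom_closed[OF hom_\<alpha> that(2)] unfolding chain_map_upto_def by simp
qed

lemma chain_map_kernel:
  assumes \<alpha>: "chain_map_upto G k Om actO d epsO La actL delta epsL \<alpha>"
    and i: "i \<le> k" and x: "x \<in> ppr_kernel i Om d epsO"
  shows "\<alpha> i x \<in> ppr_kernel i La delta epsL"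
proof -
  have hom: "perm_hom G (Om j) (actO j) (La j) (actL j) (\<alpha> j)" if "j \<le> k" for j
    using \<alpha> that unfolding chain_map_upto_def by auto
  have x_in: "x \<in> perm_module (Om i)" using x unfolding ppr_kernel_def by (auto split: if_splits)
  have \<alpha>_in: "\<alpha> i x \<in> perm_module (La i)" using perm_hom_closed[OF hom[OF i] x_in] .
  show ?thesis
  proof (cases "i = 0")
    case True
    then have "epsL (\<alpha> i x) = epsO x" using \<alpha> x_in unfolding chain_map_upto_def by simp
    also have "\<dots> = 0" using x True unfolding ppr_kernel_def by simp
    finally show ?thesis using True \<alpha>_in unfolding ppr_kernel_def by simp
  next
    case False
    then have "delta i (\<alpha> i x) = \<alpha> (i - 1) (d i x)"
      using \<alpha> i x_in unfolding chain_map_upto_def by simp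
    also have "\<dots> = \<alpha> (i - 1) (\<lambda>_. 0)" using x False unfolding ppr_kernel_def by simp
    also have "\<dots> = (\<lambda>_. 0)" using perm_hom_zero[OF hom] i by simp
    finally show ?thesis using False \<alpha>_in unfolding ppr_kernel_def by simp
  qed
qed

text \<open>Comparison theorem: the identity of \<open>\<rat>\<close> lifts degree by degree, by projectivity.\<close>

lemma exists_chain_map:
  assumes tg: "topological_group G T"
    and O: "partial_resolution G T n Om actO d epsO" and L: "partial_resolution G T n La actL delta epsL"
  obtains \<alpha> where "chain_map_upto G (Suc n) Om actO d epsO La actL delta epsL \<alpha>"
proof -
  interpret O: partial_resolution G T n Om actO d epsO by (rule O)
  interpret L: partial_resolution G T n La actL delta epsL by (rule L)
  have "\<exists>\<alpha>. chain_map_upto G k Om actO d epsO La actL delta epsL \<alpha>" if "k \<le> Suc n" for k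
    using that
  proof (induction k)
    case 0
    have "(\<lambda>u::unit. epsO x) \<in> (\<lambda>y u. epsL y) ` perm_module (La 0)" if "x \<in> perm_module (Om 0)" for x
      using L.aug_surj[of "epsO x"] by force
    then obtain \<alpha>0 where "perm_hom G (Om 0) (actO 0) (La 0) (actL 0) \<alpha>0"
      "\<And>x. x \<in> perm_module (Om 0) \<Longrightarrow> (\<lambda>u::unit. epsL (\<alpha>0 x)) = (\<lambda>u. epsO x)"
      using perm_hom_lift[OF tg O.proper L.proper aug_hom_imp_perm_hom[OF L.aug]
          aug_hom_imp_perm_hom[OF O.aug]] by auto
    then have "chain_map_upto G 0 Om actO d epsO La actL delta epsL (\<lambda>_. \<alpha>0)"
      unfolding chain_map_upto_def by (auto dest: fun_cong)
    then show ?case by blast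
  next
    case (Suc k)
    then have k: "k \<le> n" by simp
    from Suc obtain \<alpha> where \<alpha>: "chain_map_upto G k Om actO d epsO La actL delta epsL \<alpha>" by auto
    have \<alpha>k: "perm_hom G (Om k) (actO k) (La k) (actL k) (\<alpha> k)"
      using \<alpha> unfolding chain_map_upto_def by auto
    have "\<alpha> k (d (Suc k) x) \<in> delta (Suc k) ` perm_module (La (Suc k))"
      if "x \<in> perm_module (Om (Suc k))" for x
      using chain_map_kernel[OF \<alpha> order_refl O.boundary_in_kernel[OF k that]] L.kernel_eq_image[OF k]
      by simp
    then obtain \<beta> where \<beta>: "perm_hom G (Om (Suc k)) (actO (Suc k)) (La (Suc k)) (actL (Suc k)) \<beta>"
      "\<And>x. x \<in> perm_module (Om (Suc k)) \<Longrightarrow> delta (Suc k) (\<beta> x) = \<alpha> k (d (Suc k) x)"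
      using perm_hom_lift[OF tg O.proper L.proper L.d_hom[OF k] perm_hom_comp[OF O.d_hom[OF k] \<alpha>k]]
        Suc.prems by auto
    have "chain_map_upto G (Suc k) Om actO d epsO La actL delta epsL (\<alpha>(Suc k := \<beta>))"
      using \<alpha> \<beta> unfolding chain_map_upto_def by (auto simp: le_Suc_eq)
    then show ?case by blast
  qed
  then show thesis using that by blast
qed

definition chain_homotopy_upto :: "('g, 'm) monoid_scheme \<Rightarrow> nat \<Rightarrow> (nat \<Rightarrow> 'w set) \<Rightarrow>
    (nat \<Rightarrow> 'g \<Rightarrow> 'w \<Rightarrow> 'w) \<Rightarrow> (nat \<Rightarrow> ('w \<Rightarrow> rat) \<Rightarrow> ('w \<Rightarrow> rat)) \<Rightarrow>
    (nat \<Rightarrow> ('w \<Rightarrow> rat) \<Rightarrow> ('w \<Rightarrow> rat)) \<Rightarrow> (nat \<Rightarrow> ('w \<Rightarrow> rat) \<Rightarrow> ('w \<Rightarrow> rat)) \<Rightarrow> bool" where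
  "chain_homotopy_upto G k Om act d \<gamma> h \<longleftrightarrow>
     (\<forall>i\<le>k. perm_hom G (Om i) (act i) (Om (Suc i)) (act (Suc i)) (h i)) \<and>
     (\<forall>x\<in>perm_module (Om 0). d 1 (h 0 x) = (\<lambda>v. x v - \<gamma> 0 x v)) \<and>
     (\<forall>i\<in>{1..k}. \<forall>x\<in>perm_module (Om i).
        d (Suc i) (h i x) = (\<lambda>v. x v - \<gamma> i x v - h (i - 1) (d i x) v))"

lemma chain_homotopy_on_kernel:
  assumes h: "chain_homotopy_upto G k Om act d \<gamma> h"
    and i: "i \<le> k" and x: "x \<in> ppr_kernel i Om d eps"
  shows "d (Suc i) (h i x) = (\<lambda>v. x v - \<gamma> i x v)"
proof (cases "i = 0")
  case True
  then show ?thesis using h x unfolding chain_homotopy_upto_def ppr_kernel_def by simp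
next
  case False
  have x_in: "x \<in> perm_module (Om i)" and dx: "d i x = (\<lambda>_. 0)"
    using x False unfolding ppr_kernel_def by simp_all
  have "perm_hom G (Om (i - 1)) (act (i - 1)) (Om (Suc (i - 1))) (act (Suc (i - 1))) (h (i - 1))"
    using h i unfolding chain_homotopy_upto_def by simp
  then have "h (i - 1) (d i x) = (\<lambda>_. 0)" unfolding dx by (rule perm_hom_zero)
  moreover have "d (Suc i) (h i x) = (\<lambda>v. x v - \<gamma> i x v - h (i - 1) (d i x) v)"
    using h i False x_in unfolding chain_homotopy_upto_def by simp
  ultimately show ?thesis by simp
qed

lemma (in partial_resolution) homotopy_defect_in_kernel:
  assumes \<gamma>: "chain_map_upto G n Om act d eps Om act d eps \<gamma>"
    and h: "chain_homotopy_upto G k Om act d \<gamma> h" and k: "Suc k \<le> n"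
    and x: "x \<in> perm_module (Om (Suc k))"
  shows "(\<lambda>v. x v - \<gamma> (Suc k) x v - h k (d (Suc k) x) v) \<in> ppr_kernel (Suc k) Om d eps"
proof -
  let ?y = "d (Suc k) x"
  have dk: "perm_hom G (Om (Suc k)) (act (Suc k)) (Om k) (act k) (d (Suc k))"
    using d_hom k by simp
  have \<gamma>k: "perm_hom G (Om (Suc k)) (act (Suc k)) (Om (Suc k)) (act (Suc k)) (\<gamma> (Suc k))"
    using \<gamma> k unfolding chain_map_upto_def by simp
  have hk: "perm_hom G (Om k) (act k) (Om (Suc k)) (act (Suc k)) (h k)"
    using h unfolding chain_homotopy_upto_def by simp
  have y: "?y \<in> ppr_kernel k Om d eps" using boundary_in_kernel k x by simp
  have "d (Suc k) (\<lambda>v. x v - \<gamma> (Suc k) x v - h k ?y v)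
      = (\<lambda>v. ?y v - d (Suc k) (\<gamma> (Suc k) x) v - d (Suc k) (h k ?y) v)"
    using perm_hom_diff[OF dk perm_module_diff[OF x] perm_hom_closed[OF hk]]
      perm_hom_diff[OF dk x] perm_hom_closed[OF \<gamma>k x] perm_hom_closed[OF dk x]
    by simp
  also have "\<dots> = (\<lambda>_. 0)"
    using chain_homotopy_on_kernel[OF h order_refl y] \<gamma> k x unfolding chain_map_upto_def by auto
  finally show ?thesis
    using perm_module_diff[OF perm_module_diff[OF x perm_hom_closed[OF \<gamma>k x]]
        perm_hom_closed[OF hk perm_hom_closed[OF dk x]]]
    unfolding ppr_kernel_def by simp
qed

text \<open>Any chain endomorphism \<open>\<gamma>\<close> of a resolution over the identity of \<open>\<rat>\<close> is chain homotopic
  to the identity: \<open>h\<close> is built degree by degree, lifting \<open>1 - \<gamma> - h d\<close>, whose image consists of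
  cycles, along the next differential.\<close>

lemma (in partial_resolution) exists_chain_homotopy:
  assumes tg: "topological_group G T"
    and \<gamma>: "chain_map_upto G n Om act d eps Om act d eps \<gamma>"
  obtains h where "chain_homotopy_upto G n Om act d \<gamma> h"
proof -
  have \<gamma>_hom: "perm_hom G (Om i) (act i) (Om i) (act i) (\<gamma> i)" if "i \<le> n" for i
    using \<gamma> that unfolding chain_map_upto_def by auto
  have "\<exists>h. chain_homotopy_upto G k Om act d \<gamma> h" if "k \<le> n" for k
    using that
  proof (induction k)
    case 0
    let ?f = "\<lambda>x v. x v - \<gamma> 0 x v"
    have f: "perm_hom G (Om 0) (act 0) (Om 0) (act 0) ?f"
      using perm_hom_minus[OF perm_hom_id \<gamma>_hom] by simp
    have "?f x \<in> d 1 ` perm_module (Om 1)" if x: "x \<in> perm_module (Om 0)" for x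
    proof -
      have "eps (?f x) = 0"
        using aug_hom_diff[OF aug x perm_hom_closed[OF \<gamma>_hom x]] \<gamma> x
        unfolding chain_map_upto_def by simp
      then show ?thesis
        using perm_hom_closed[OF f x] kernel_eq_image[of 0] unfolding ppr_kernel_def by auto
    qed
    then obtain h0 where "perm_hom G (Om 0) (act 0) (Om 1) (act 1) h0"
      "\<And>x. x \<in> perm_module (Om 0) \<Longrightarrow> d 1 (h0 x) = ?f x"
      using perm_hom_lift[OF tg proper proper d_hom[of 0] f] by auto
    then have "chain_homotopy_upto G 0 Om act d \<gamma> (\<lambda>_. h0)"
      unfolding chain_homotopy_upto_def by auto
    then show ?case by blast
  next
    case (Suc k)
    from Suc obtain h where h: "chain_homotopy_upto G k Om act d \<gamma> h" by auto
    have hk: "perm_hom G (Om k) (act k) (Om (Suc k)) (act (Suc k)) (h k)"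
      using h unfolding chain_homotopy_upto_def by auto
    let ?f = "\<lambda>x v. x v - \<gamma> (Suc k) x v - h k (d (Suc k) x) v"
    have f: "perm_hom G (Om (Suc k)) (act (Suc k)) (Om (Suc k)) (act (Suc k)) ?f"
      using perm_hom_minus[OF perm_hom_minus[OF perm_hom_id \<gamma>_hom[OF Suc.prems]]
          perm_hom_comp[OF d_hom hk]] Suc.prems by simp
    have "?f x \<in> d (Suc (Suc k)) ` perm_module (Om (Suc (Suc k)))"
      if "x \<in> perm_module (Om (Suc k))" for x
      using homotopy_defect_in_kernel[OF \<gamma> h Suc.prems that] kernel_eq_image[OF Suc.prems] by simp
    then obtain \<beta> where \<beta>: "perm_hom G (Om (Suc k)) (act (Suc k)) (Om (Suc (Suc k))) (act (Suc (Suc k))) \<beta>"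
      "\<And>x. x \<in> perm_module (Om (Suc k)) \<Longrightarrow> d (Suc (Suc k)) (\<beta> x) = ?f x"
      using perm_hom_lift[OF tg proper proper d_hom[OF Suc.prems] f] Suc.prems by auto
    have "chain_homotopy_upto G (Suc k) Om act d \<gamma> (h(Suc k := \<beta>))"
      using h \<beta> unfolding chain_homotopy_upto_def by (auto simp: le_Suc_eq)
    then show ?case by blast
  qed
  then show thesis using that by blast
qed

lemma chain_homotopy_filling:
  assumes \<beta>: "chain_map_upto G (Suc n) La actL delta epsL Om act d eps \<beta>"
    and h: "chain_homotopy_upto G n Om act d (\<lambda>i x. \<beta> i (\<alpha> i x)) h"
    and d: "perm_hom G (Om (Suc n)) (act (Suc n)) (Om n) (act n) (d (Suc n))"
    and x: "x \<in> ppr_kernel n Om d eps" and y: "y \<in> perm_module (La (Suc n))"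
    and fills: "delta (Suc n) y = \<alpha> n x"
  shows "d (Suc n) (\<lambda>v. \<beta> (Suc n) y v + h n x v) = x"
proof -
  have x_in: "x \<in> perm_module (Om n)" using x unfolding ppr_kernel_def by (simp split: if_splits)
  have "\<beta> (Suc n) y \<in> perm_module (Om (Suc n))"
    using \<beta> y unfolding chain_map_upto_def by (blast intro: perm_hom_closed)
  moreover have "h n x \<in> perm_module (Om (Suc n))"
    using h x_in unfolding chain_homotopy_upto_def by (blast intro: perm_hom_closed)
  ultimately have "d (Suc n) (\<lambda>v. \<beta> (Suc n) y v + h n x v)
      = (\<lambda>v. d (Suc n) (\<beta> (Suc n) y) v + d (Suc n) (h n x) v)"
    by (rule perm_hom_add[OF d])
  also have "d (Suc n) (\<beta> (Suc n) y) = \<beta> n (\<alpha> n x)"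
    using \<beta> y fills unfolding chain_map_upto_def by auto
  also have "d (Suc n) (h n x) = (\<lambda>v. x v - \<beta> n (\<alpha> n x) v)"
    using chain_homotopy_on_kernel[OF h order_refl x] .
  finally show ?thesis by simp
qed

text \<open>A filling of \<open>a x\<close> in the other resolution, mapped back by \<open>b\<close> and corrected by the
  homotopy term \<open>h x\<close>, fills \<open>x\<close>; all three maps are bounded in the l1-norm.\<close>

lemma weak_linear_isoperimetric_transfer:
  assumes iso: "weak_linear_isoperimetric n La delta epsL"
    and fillable: "ppr_kernel n La delta epsL \<subseteq> delta (Suc n) ` perm_module (La (Suc n))"
    and a: "\<And>x. x \<in> ppr_kernel n Om d epsO \<Longrightarrow>
      a x \<in> ppr_kernel n La delta epsL \<and> l1_norm (a x) \<le> Ba * l1_norm x"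
    and b: "\<And>y. y \<in> perm_module (La (Suc n)) \<Longrightarrow>
      b y \<in> perm_module (Om (Suc n)) \<and> l1_norm (b y) \<le> Bb * l1_norm y"
    and h: "\<And>x. x \<in> ppr_kernel n Om d epsO \<Longrightarrow>
      h x \<in> perm_module (Om (Suc n)) \<and> l1_norm (h x) \<le> Bh * l1_norm x"
    and fill: "\<And>x y. x \<in> ppr_kernel n Om d epsO \<Longrightarrow> y \<in> perm_module (La (Suc n)) \<Longrightarrow>
      delta (Suc n) y = a x \<Longrightarrow> d (Suc n) (\<lambda>v. b y v + h x v) = x"
    and pos: "Ba > 0" "Bb > 0" "Bh > 0"
  shows "weak_linear_isoperimetric n Om d epsO"
proof -
  obtain C where C: "C > 0" "\<And>x. x \<in> ppr_kernel n La delta epsL \<Longrightarrow>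
      (INF y\<in>{y\<in>perm_module (La (Suc n)). delta (Suc n) y = x}. l1_norm y) \<le> C * l1_norm x"
    using iso unfolding weak_linear_isoperimetric_def by blast
  have "(INF y\<in>{y\<in>perm_module (Om (Suc n)). d (Suc n) y = x}. l1_norm y)
      \<le> (Bb * C * Ba + Bh) * l1_norm x" if x: "x \<in> ppr_kernel n Om d epsO" for x
  proof -
    define inf_O where "inf_O = (INF y\<in>{y\<in>perm_module (Om (Suc n)). d (Suc n) y = x}. l1_norm y)"
    let ?SL = "{y\<in>perm_module (La (Suc n)). delta (Suc n) y = a x}"
    have "a x \<in> delta (Suc n) ` perm_module (La (Suc n))" using a[OF x] fillable by blast
    then have "?SL \<noteq> {}" by auto
    moreover have "(inf_O - Bh * l1_norm x) / Bb \<le> l1_norm y" if y: "y \<in> ?SL" for y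
    proof -
      let ?z = "\<lambda>v. b y v + h x v"
      have b_y: "b y \<in> perm_module (Om (Suc n))" and h_x: "h x \<in> perm_module (Om (Suc n))"
        using b h x y by auto
      then have "?z \<in> {y\<in>perm_module (Om (Suc n)). d (Suc n) y = x}"
        using fill x y by (auto intro: perm_module_add)
      then have "inf_O \<le> l1_norm ?z" unfolding inf_O_def by (rule cINF_lower[OF bdd_below_l1_norm])
      also have "\<dots> \<le> l1_norm (b y) + l1_norm (h x)"
        using b_y h_x by (intro l1_norm_add_le) (auto simp: perm_module_iff)
      also have "\<dots> \<le> l1_norm y * Bb + Bh * l1_norm x"
        using b h x y by (intro add_mono) (auto simp: mult.commute)
      finally show ?thesis using pos(2) by (simp add: pos_divide_le_eq)
    qed
    ultimately have "(inf_O - Bh * l1_norm x) / Bb \<le> (INF y\<in>?SL. l1_norm y)"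
      by (rule cINF_greatest)
    also have "\<dots> \<le> C * l1_norm (a x)" using C(2) a[OF x] by blast
    also have "\<dots> \<le> C * (Ba * l1_norm x)" using C(1) a[OF x] by (intro mult_left_mono) auto
    finally have "inf_O \<le> C * (Ba * l1_norm x) * Bb + Bh * l1_norm x"
      using pos(2) by (simp add: pos_divide_le_eq)
    then show ?thesis unfolding inf_O_def by (simp add: algebra_simps)
  qed
  moreover have "Bb * C * Ba + Bh > 0" using pos C(1) by (simp add: add_pos_pos)
  ultimately show ?thesis unfolding weak_linear_isoperimetric_def by blast
qed

lemma weak_linear_isoperimetric_change_resolution:
  assumes tg: "topological_group G T"
    and O: "partial_resolution G T n Om actO d epsO" and L: "partial_resolution G T n La actL delta epsL"
    and iso: "weak_linear_isoperimetric n La delta epsL"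
  shows "weak_linear_isoperimetric n Om d epsO"
proof -
  interpret O: partial_resolution G T n Om actO d epsO by (rule O)
  interpret L: partial_resolution G T n La actL delta epsL by (rule L)
  obtain \<alpha> where \<alpha>: "chain_map_upto G (Suc n) Om actO d epsO La actL delta epsL \<alpha>"
    using exists_chain_map[OF tg O L] .
  obtain \<beta> where \<beta>: "chain_map_upto G (Suc n) La actL delta epsL Om actO d epsO \<beta>"
    using exists_chain_map[OF tg L O] .
  have "chain_map_upto G n Om actO d epsO Om actO d epsO (\<lambda>i x. \<beta> i (\<alpha> i x))"
    by (rule chain_map_upto_mono[OF chain_map_upto_comp[OF \<alpha> \<beta>]]) simp
  then obtain h where h: "chain_homotopy_upto G n Om actO d (\<lambda>i x. \<beta> i (\<alpha> i x)) h"
    using O.exists_chain_homotopy[OF tg] by blast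
  have \<alpha>n: "perm_hom G (Om n) (actO n) (La n) (actL n) (\<alpha> n)"
    and \<beta>n: "perm_hom G (La (Suc n)) (actL (Suc n)) (Om (Suc n)) (actO (Suc n)) (\<beta> (Suc n))"
    using \<alpha> \<beta> unfolding chain_map_upto_def by auto
  have hn: "perm_hom G (Om n) (actO n) (Om (Suc n)) (actO (Suc n)) (h n)"
    using h unfolding chain_homotopy_upto_def by auto
  obtain Ba where Ba: "Ba > 0" "\<And>x. x \<in> perm_module (Om n) \<Longrightarrow> l1_norm (\<alpha> n x) \<le> Ba * l1_norm x"
    using perm_hom_l1_bounded[OF O.group_action O.finite_orbits L.group_action \<alpha>n] by auto
  obtain Bb where Bb: "Bb > 0"
    "\<And>y. y \<in> perm_module (La (Suc n)) \<Longrightarrow> l1_norm (\<beta> (Suc n) y) \<le> Bb * l1_norm y"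
    using perm_hom_l1_bounded[OF L.group_action L.finite_orbits O.group_action \<beta>n] by auto
  obtain Bh where Bh: "Bh > 0" "\<And>x. x \<in> perm_module (Om n) \<Longrightarrow> l1_norm (h n x) \<le> Bh * l1_norm x"
    using perm_hom_l1_bounded[OF O.group_action O.finite_orbits O.group_action hn] by auto
  have fillable: "ppr_kernel n La delta epsL \<subseteq> delta (Suc n) ` perm_module (La (Suc n))"
    using L.kernel_eq_image by simp
  have \<alpha>_bound: "\<alpha> n x \<in> ppr_kernel n La delta epsL \<and> l1_norm (\<alpha> n x) \<le> Ba * l1_norm x"
    if "x \<in> ppr_kernel n Om d epsO" for x
    using chain_map_kernel[OF \<alpha> _ that] Ba(2) O.kernel_subset that by auto
  have \<beta>_bound: "\<beta> (Suc n) y \<in> perm_module (Om (Suc n)) \<and> l1_norm (\<beta> (Suc n) y) \<le> Bb * l1_norm y"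
    if "y \<in> perm_module (La (Suc n))" for y
    using perm_hom_closed[OF \<beta>n that] Bb(2)[OF that] by simp
  have h_bound: "h n x \<in> perm_module (Om (Suc n)) \<and> l1_norm (h n x) \<le> Bh * l1_norm x"
    if "x \<in> ppr_kernel n Om d epsO" for x
    using O.kernel_subset that perm_hom_closed[OF hn] Bh(2) by blast
  show ?thesis
    using weak_linear_isoperimetric_transfer[of n La delta epsL Om d epsO "\<alpha> n" Ba "\<beta> (Suc n)" Bb "h n" Bh,
        OF iso fillable \<alpha>_bound \<beta>_bound h_bound chain_homotopy_filling[OF \<beta> h O.d_hom[OF order_refl]]
        Ba(1) Bb(1) Bh(1)] .
qed

theorem proposition4p6:
  fixes G :: "('g, 'm) monoid_scheme" and T :: "'g topology" and n :: nat
    and Om :: "nat \<Rightarrow> 'w set" and actO :: "nat \<Rightarrow> 'g \<Rightarrow> 'w \<Rightarrow> 'w"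
    and d :: "nat \<Rightarrow> ('w \<Rightarrow> rat) \<Rightarrow> ('w \<Rightarrow> rat)" and epsO :: "('w \<Rightarrow> rat) \<Rightarrow> rat"
    and La :: "nat \<Rightarrow> 'v set" and actL :: "nat \<Rightarrow> 'g \<Rightarrow> 'v \<Rightarrow> 'v"
    and delta :: "nat \<Rightarrow> ('v \<Rightarrow> rat) \<Rightarrow> ('v \<Rightarrow> rat)" and epsL :: "('v \<Rightarrow> rat) \<Rightarrow> rat"
  assumes "TDLC_group G T"
    and "partial_ppr G T n Om actO d epsO"
    and "partial_ppr G T n La actL delta epsL"
  shows "weak_linear_isoperimetric n La delta epsL \<longleftrightarrow> weak_linear_isoperimetric n Om d epsO"
proof -
  have tg: "topological_group G T" using assms(1) unfolding TDLC_group_def by simp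
  have O: "partial_resolution G T n Om actO d epsO" and L: "partial_resolution G T n La actL delta epsL"
    using assms(2,3) by (simp_all add: partial_resolution_def)
  show ?thesis
    using weak_linear_isoperimetric_change_resolution[OF tg O L]
      weak_linear_isoperimetric_change_resolution[OF tg L O] by blast
qed

end
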